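(* Let $R$ be a finite Frobenius ring and let $\psi$ be a primitive additive character of $R$. Let $a,b\in R$. For each principal ideal $D$ of $R$ with $(a)\subseteq D$ and $(b)\subseteq D$, choose a generator $d$ of $D$ and elements $a_0,b_0\in R$ with $a=da_0$, $b=db_0$, and define $$T_D=\sum_{v\in (R/d^\perp)^\times}\psi\big(d\tilde v\big)\,\psi\big(d\,a_0b_0\,\tilde v^{-1}\big)$$ if $d\neq 0$, where $\tilde v\in R^\times$ is any lift of $v$ (so the summand is $K(d.\psi,(a_0b_0).(d.\psi))$ computed over the quotient ring $R/d^\perp$, on which $d.\psi$ is a well-defined primitive character), and $T_D=1$ if $D=(0)$ (this case only occurs when $a=b=0$; it corresponds to the Kloosterman sum over the zero ring). Then $T_D$ and $|d^\perp|$ do not depend on the choices made, and $$\sum_{u\in R^\times}\psi(au+bu^{-1})=\sum_{\substack{D=(d)\text{ principal}\\ (a),(b)\subseteq D}} |d^\perp|\;T_D .$$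
   Context: All rings are finite and commutative with identity; $R^\times$ denotes the unit group. An additive character of $R$ is a group homomorphism $(R,+)\to\mathbb{C}^*$; for $c\in R$ and an additive character $\psi$, $c.\psi$ denotes the character $r\mapsto\psi(cr)$. The conductor of an additive character is the largest ideal on which it is identically $1$; a character is primitive if its conductor is the zero ideal. $R$ is called Frobenius if it admits a primitive additive character. For an ideal $I$ (or element $d$), $I^\perp=\{r\in R: rx=0\ \forall x\in I\}$ and $d^\perp=(d)^\perp$. For additive characters $\phi,\psi$ of a finite ring $S$, the Kloosterman sum is $K(\phi,\psi)=\sum_{u\in S^\times}\phi(u)\psi(u^{-1})$. *)

theory Defs
  imports Complex_Main
begin

definition ring_units :: "'a::comm_ring_1 set" where
  "ring_units = {u. \<exists>v. u * v = 1}"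

definition uinv :: "'a::comm_ring_1 \<Rightarrow> 'a" where
  "uinv u = (SOME v. u * v = 1)"

definition add_char :: "('a::comm_ring_1 \<Rightarrow> complex) \<Rightarrow> bool" where
  "add_char \<psi> \<longleftrightarrow> (\<forall>x y. \<psi> (x + y) = \<psi> x * \<psi> y) \<and> (\<forall>x. \<psi> x \<noteq> 0)"

definition is_ideal :: "'a::comm_ring_1 set \<Rightarrow> bool" where
  "is_ideal I \<longleftrightarrow> 0 \<in> I \<and> (\<forall>x\<in>I. \<forall>y\<in>I. x + y \<in> I) \<and> (\<forall>r. \<forall>x\<in>I. r * x \<in> I)"

definition conductor :: "('a::comm_ring_1 \<Rightarrow> complex) \<Rightarrow> 'a set" where
  "conductor \<psi> = \<Union>{I. is_ideal I \<and> (\<forall>x\<in>I. \<psi> x = 1)}"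

definition primitive_char :: "('a::comm_ring_1 \<Rightarrow> complex) \<Rightarrow> bool" where
  "primitive_char \<psi> \<longleftrightarrow> add_char \<psi> \<and> conductor \<psi> = {0}"

definition frobenius_ring :: "'a::{comm_ring_1,finite} itself \<Rightarrow> bool" where
  "frobenius_ring _ \<longleftrightarrow> (\<exists>\<psi> :: 'a \<Rightarrow> complex. primitive_char \<psi>)"

definition pideal :: "'a::comm_ring_1 \<Rightarrow> 'a set" where
  "pideal d = {d * r | r. True}"

definition perp :: "'a::comm_ring_1 set \<Rightarrow> 'a set" where
  "perp I = {r. \<forall>x\<in>I. r * x = 0}"

definition coset :: "'a::comm_ring_1 set \<Rightarrow> 'a \<Rightarrow> 'a set" where
  "coset I x = {y. x - y \<in> I}"

definition quot_units :: "'a::comm_ring_1 set \<Rightarrow> 'a set set" where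
  "quot_units I = {coset I x | x. \<exists>y. x * y - 1 \<in> I}"

definition unit_lift :: "'a::comm_ring_1 set \<Rightarrow> 'a" where
  "unit_lift C = (SOME u. u \<in> C \<and> u \<in> ring_units)"

text \<open>The term T_D, for a generator d of D and a = d a0, b = d b0.\<close>
definition T_term :: "('a::comm_ring_1 \<Rightarrow> complex) \<Rightarrow> 'a \<Rightarrow> 'a \<Rightarrow> 'a \<Rightarrow> complex" where
  "T_term \<psi> d a0 b0 =
     (if d = 0 then 1
      else (\<Sum>C\<in>quot_units (perp (pideal d)).
              \<psi> (d * unit_lift C) * \<psi> (d * (a0 * b0) * uinv (unit_lift C))))"

definition div_ideals :: "'a::comm_ring_1 \<Rightarrow> 'a \<Rightarrow> 'a set set" where
  "div_ideals a b = {D. (\<exists>d. D = pideal d) \<and> pideal a \<subseteq> D \<and> pideal b \<subseteq> D}"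

end

theory Submission
  imports Defs
begin

text \<open>Write the Kloosterman sum as the sum of \<open>\<psi>(a x) \<psi>(z)\<close> over all pairs with
  \<open>x z = b\<close>. Summing over \<open>z\<close> first, character orthogonality on the coset
  \<open>{z. x z = b}\<close> of \<open>x\<^sup>\<perp>\<close> kills every non-unit \<open>x\<close>. Summing over \<open>x\<close> first
  instead, orthogonality on \<open>z\<^sup>\<perp>\<close> together with \<open>z\<^sup>\<perp>\<^sup>\<perp> = (z)\<close> (a consequence of
  \<open>|I| |I\<^sup>\<perp>| = |R|\<close>, which holds because \<open>\<psi>\<close> is primitive) leaves exactly the \<open>z\<close>
  with \<open>a, b \<in> (z)\<close>, each weighted by \<open>|z\<^sup>\<perp>|\<close>. Grouping these \<open>z\<close> by the ideal
  \<open>D = (z)\<close> gives the theorem, because the generators of \<open>(d)\<close> are the products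
  \<open>d u\<close> with \<open>u\<close> running over lifts of the units of \<open>R/d\<^sup>\<perp>\<close>, and units of
  \<open>R/d\<^sup>\<perp>\<close> do lift to units of the finite ring \<open>R\<close>.\<close>

lemma finite_ring_idempotent_power:
  "\<exists>n>0. (x::'a::{comm_ring_1,finite}) ^ n * x ^ n = x ^ n"
proof -
  have "\<not> inj (\<lambda>n::nat. x ^ n)"
    using finite_imageD[of "\<lambda>n::nat. x ^ n" UNIV] by auto
  then obtain i j where "i < j" "x ^ i = x ^ j"
    unfolding inj_def by (metis linorder_neqE_nat)
  define p where "p = j - i"
  have "p > 0" using \<open>i < j\<close> by (simp add: p_def)
  have periodic: "x ^ (k + m * p) = x ^ k" if "k \<ge> i" for k m
  proof (induction m)
    case (Suc m)
    have "k + Suc m * p = (k + m * p - i) + j"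
      using that \<open>i < j\<close> by (simp add: p_def)
    hence "x ^ (k + Suc m * p) = x ^ (k + m * p - i) * x ^ j"
      by (simp add: power_add)
    also have "\<dots> = x ^ (k + m * p - i) * x ^ i"
      using \<open>x ^ i = x ^ j\<close> by simp
    also have "\<dots> = x ^ (k + m * p)"
      using that by (simp add: power_add[symmetric])
    finally show ?case using Suc by simp
  qed simp
  define n where "n = Suc i * p"
  have "Suc i * 1 \<le> Suc i * p"
    using \<open>p > 0\<close> by (intro mult_le_mono2) simp
  hence "n \<ge> Suc i" by (simp add: n_def)
  hence "x ^ n * x ^ n = x ^ n"
    using periodic[of n "Suc i"] by (simp add: n_def power_add[symmetric] mult.commute)
  thus ?thesis using \<open>n \<ge> Suc i\<close> by (intro exI[of _ n]) simp
qed

text \<open>Units of \<open>R/ann(d)\<close> lift to units of \<open>R\<close>: for an idempotent power \<open>e = x\<^sup>n\<close>,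
  the element \<open>x e + (1 - e)\<close> is a unit, and \<open>d (1 - e) = 0\<close> because
  \<open>d = d (x y)\<^sup>n = d e y\<^sup>n\<close>.\<close>

lemma unit_lift_mod_annihilator:
  fixes d x y :: "'a::{comm_ring_1,finite}"
  assumes "d * (x * y - 1) = 0"
  shows "\<exists>u\<in>ring_units. d * u = d * x"
proof -
  obtain n where "n > 0" and idem: "x ^ n * x ^ n = x ^ n"
    using finite_ring_idempotent_power by blast
  define e where "e = x ^ n"
  have ee: "e * e = e" using idem by (simp add: e_def)
  have "d * (x * y) ^ k = d" for k
  proof (induction k)
    case (Suc k)
    have "d * (x * y) ^ Suc k = d * (x * y) * (x * y) ^ k" by (simp add: ac_simps)
    also have "d * (x * y) = d" using assms by (simp add: algebra_simps)
    finally show ?case using Suc by simp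
  qed simp
  hence "d = d * e * y ^ n" by (simp add: e_def power_mult_distrib ac_simps)
  hence d_e: "d * (1 - e) = 0"
    by (metis ee diff_self mult.assoc mult.commute right_diff_distrib mult_1_right)
  define u where "u = x * e + (1 - e)"
  have xe: "x * x ^ (n - 1) = e"
    using \<open>n > 0\<close> by (cases n) (simp_all add: e_def)
  have "u * (x ^ (n - 1) * e + (1 - e)) = (x * x ^ (n - 1)) * (e * e) + (x + x ^ (n - 1)) * (e - e * e) + (1 - e) * (1 - e)"
    by (simp add: u_def algebra_simps)
  also have "\<dots> = e + (1 - e) * (1 - e)"
    using ee xe by simp
  also have "\<dots> = 1"
    using ee by (simp add: algebra_simps)
  finally have "u \<in> ring_units" unfolding ring_units_def by blast
  moreover have "d * u = d * x"
  proof -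
    have "d * u = x * (d * e) + d * (1 - e)" by (simp add: u_def algebra_simps)
    also have "d * e = d" using d_e by (simp add: algebra_simps)
    finally show ?thesis using d_e by (simp add: mult.commute)
  qed
  ultimately show ?thesis by blast
qed

lemma mem_pideal_iff: "x \<in> pideal d \<longleftrightarrow> (\<exists>r. x = d * r)"
  unfolding pideal_def by blast

lemma self_in_pideal: "d \<in> pideal d"
  unfolding mem_pideal_iff by (metis mult_1_right)

lemma mem_pideal_iff_subset: "a \<in> pideal e \<longleftrightarrow> pideal a \<subseteq> pideal e"
proof
  assume "a \<in> pideal e"
  then obtain r where "a = e * r" by (auto simp: mem_pideal_iff)
  thus "pideal a \<subseteq> pideal e"
    unfolding mem_pideal_iff subset_iff by (metis mult.assoc)
qed (use self_in_pideal in blast)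

lemma pideal_eq_zero_iff: "pideal e = pideal 0 \<longleftrightarrow> e = 0"
  using self_in_pideal[of e] by (auto simp: mem_pideal_iff)

lemma one_in_pideal_iff: "1 \<in> pideal x \<longleftrightarrow> x \<in> ring_units"
  unfolding mem_pideal_iff ring_units_def mem_Collect_eq by metis

lemma mem_perp_pideal_iff: "r \<in> perp (pideal d) \<longleftrightarrow> r * d = 0"
proof
  assume "r \<in> perp (pideal d)"
  thus "r * d = 0" using self_in_pideal unfolding perp_def by blast
next
  assume "r * d = 0"
  thus "r \<in> perp (pideal d)" unfolding perp_def pideal_def by (auto simp: mult.assoc[symmetric])
qed

lemma is_ideal_perp: "is_ideal (perp I)"
  unfolding is_ideal_def perp_def by (simp add: distrib_right mult.assoc)

lemma is_ideal_pideal: "is_ideal (pideal d)"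
  unfolding is_ideal_def
proof (intro conjI ballI allI)
  show "0 \<in> pideal d" unfolding mem_pideal_iff by (intro exI[of _ 0]) simp
next
  fix x y assume "x \<in> pideal d" "y \<in> pideal d"
  then obtain r s where "x = d * r" "y = d * s" by (auto simp: mem_pideal_iff)
  thus "x + y \<in> pideal d"
    unfolding mem_pideal_iff by (intro exI[of _ "r + s"]) (simp add: distrib_left)
next
  fix t x assume "x \<in> pideal d"
  then obtain r where "x = d * r" by (auto simp: mem_pideal_iff)
  thus "t * x \<in> pideal d"
    unfolding mem_pideal_iff by (intro exI[of _ "t * r"]) (simp add: mult.left_commute)
qed

lemma is_ideal_UNIV: "is_ideal UNIV"
  unfolding is_ideal_def by simp

lemma unit_mult_uinv: "u \<in> ring_units \<Longrightarrow> u * uinv u = 1"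
  unfolding ring_units_def uinv_def by (rule someI_ex) blast

lemma pideal_mult_unit: "u \<in> ring_units \<Longrightarrow> pideal (d * u) = pideal d"
  unfolding pideal_def
  by (auto simp: mult.assoc) (metis mult.assoc mult_1_right unit_mult_uinv)

lemma coset_perp_pideal: "coset (perp (pideal d)) x = {y. d * y = d * x}"
  unfolding coset_def mem_perp_pideal_iff by (auto simp: algebra_simps)

lemma unit_lift_in_coset:
  fixes d :: "'a::{comm_ring_1,finite}"
  assumes "C \<in> quot_units (perp (pideal d))"
  shows "unit_lift C \<in> C" and "unit_lift C \<in> ring_units"
proof -
  obtain x y where C: "C = coset (perp (pideal d)) x" "x * y - 1 \<in> perp (pideal d)"
    using assms unfolding quot_units_def by blast
  then obtain u where "u \<in> ring_units" "d * u = d * x"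
    using unit_lift_mod_annihilator[of d x y] by (auto simp: mem_perp_pideal_iff mult.commute)
  hence "\<exists>u. u \<in> C \<and> u \<in> ring_units" using C(1) by (auto simp: coset_perp_pideal)
  hence "unit_lift C \<in> C \<and> unit_lift C \<in> ring_units"
    unfolding unit_lift_def by (rule someI_ex)
  thus "unit_lift C \<in> C" "unit_lift C \<in> ring_units" by blast+
qed

lemma bij_betw_quot_units_generators:
  fixes d :: "'a::{comm_ring_1,finite}"
  shows "bij_betw (\<lambda>C. d * unit_lift C) (quot_units (perp (pideal d))) {e. pideal e = pideal d}"
proof (rule bij_betw_imageI)
  let ?U = "quot_units (perp (pideal d))"
  have coset_lift: "C = {y. d * y = d * unit_lift C}" if C: "C \<in> ?U" for C
  proof -
    obtain x where "C = coset (perp (pideal d)) x"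
      using C unfolding quot_units_def by blast
    hence x: "C = {y. d * y = d * x}" by (simp add: coset_perp_pideal)
    moreover have "d * unit_lift C = d * x"
      using unit_lift_in_coset(1)[OF C] x by simp
    ultimately show ?thesis by simp
  qed
  show "inj_on (\<lambda>C. d * unit_lift C) ?U"
    by (rule inj_onI) (metis coset_lift)
  show "(\<lambda>C. d * unit_lift C) ` ?U = {e. pideal e = pideal d}"
  proof (intro equalityI subsetI)
    fix e assume "e \<in> (\<lambda>C. d * unit_lift C) ` ?U"
    then obtain C where "C \<in> ?U" "e = d * unit_lift C" by blast
    thus "e \<in> {e. pideal e = pideal d}"
      by (simp add: pideal_mult_unit unit_lift_in_coset(2))
  next
    fix e assume "e \<in> {e. pideal e = pideal d}"
    hence "e \<in> pideal d" "d \<in> pideal e" using self_in_pideal by auto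
    then obtain x y where x: "e = d * x" and y: "d = e * y"
      unfolding mem_pideal_iff by blast
    have "d * x * y = d" by (metis x y)
    hence "x * y - 1 \<in> perp (pideal d)"
      unfolding mem_perp_pideal_iff by (simp add: algebra_simps)
    hence C: "coset (perp (pideal d)) x \<in> ?U"
      unfolding quot_units_def by blast
    have "d * unit_lift (coset (perp (pideal d)) x) = e"
      using unit_lift_in_coset(1)[OF C] x by (simp add: coset_perp_pideal)
    thus "e \<in> (\<lambda>C. d * unit_lift C) ` ?U" using C by (metis image_eqI)
  qed
qed

text \<open>The contribution of \<open>z = e\<close> to the double sum: \<open>\<psi>(e) \<psi>(a \<beta>)\<close> for any \<open>\<beta>\<close> with
  \<open>b = e \<beta>\<close>; when \<open>a \<in> (e)\<close> the choice of \<open>\<beta>\<close> (unique modulo \<open>e\<^sup>\<perp>\<close>) is irrelevant.\<close>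

definition divisor_term :: "('a::comm_ring_1 \<Rightarrow> complex) \<Rightarrow> 'a \<Rightarrow> 'a \<Rightarrow> 'a \<Rightarrow> complex" where
  "divisor_term \<psi> a b e = \<psi> e * \<psi> (a * (SOME \<beta>. b = e * \<beta>))"

locale primitive_character =
  fixes \<psi> :: "'a::{comm_ring_1,finite} \<Rightarrow> complex"
  assumes primitive: "primitive_char \<psi>"
begin

lemma psi_add: "\<psi> (x + y) = \<psi> x * \<psi> y"
  using primitive unfolding primitive_char_def add_char_def by blast

lemma psi_zero: "\<psi> 0 = 1"
proof -
  have "\<psi> 0 * \<psi> 0 = \<psi> 0 * 1" using psi_add[of 0 0] by simp
  moreover have "\<psi> 0 \<noteq> 0" using primitive unfolding primitive_char_def add_char_def by blast
  ultimately show ?thesis by simp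
qed

lemma char_sum_ideal:
  assumes I: "is_ideal I"
  shows "(\<Sum>t\<in>I. \<psi> (r * t)) = (if \<forall>t\<in>I. r * t = 0 then of_nat (card I) else 0)"
proof (cases "\<forall>t\<in>I. r * t = 0")
  case False
  define K where "K = (\<lambda>t. r * t) ` I"
  have "is_ideal K"
    using I unfolding is_ideal_def K_def
    by (auto simp: image_iff) (metis mult_zero_right, metis distrib_left, metis mult.left_commute)
  moreover have "K \<noteq> {0}" using False by (auto simp: K_def)
  ultimately have "\<not> (\<forall>x\<in>K. \<psi> x = 1)"
    using primitive I unfolding primitive_char_def conductor_def is_ideal_def by blast
  then obtain s where s: "s \<in> I" "\<psi> (r * s) \<noteq> 1" unfolding K_def by blast
  have "t + s \<in> I" "t - s \<in> I" if "t \<in> I" for t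
    using I that s unfolding is_ideal_def by (metis diff_conv_add_uminus mult_minus1)+
  hence "(\<Sum>t\<in>I. \<psi> (r * t)) = (\<Sum>t\<in>I. \<psi> (r * (t + s)))"
    by (intro sum.reindex_bij_witness[of _ "\<lambda>t. t + s" "\<lambda>t. t - s"]) auto
  also have "\<dots> = \<psi> (r * s) * (\<Sum>t\<in>I. \<psi> (r * t))"
    by (simp add: sum_distrib_left distrib_left psi_add mult.commute)
  finally have "(\<Sum>t\<in>I. \<psi> (r * t)) = 0" using s(2) by (simp add: mult_cancel_right1)
  thus ?thesis by (subst if_not_P[OF False])
qed (simp add: psi_zero)

text \<open>Evaluate \<open>\<Sum>\<^sub>r \<Sum>\<^sub>x\<^sub>\<in>\<^sub>I \<psi>(r x)\<close> in both orders.\<close>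

lemma card_mult_card_perp:
  assumes I: "is_ideal (I :: 'a set)"
  shows "card I * card (perp I) = card (UNIV :: 'a set)"
proof -
  have "(\<Sum>r\<in>UNIV. \<Sum>x\<in>I. \<psi> (r * x)) = (\<Sum>r\<in>UNIV. if r \<in> perp I then of_nat (card I) else 0)"
    by (simp add: char_sum_ideal[OF I] perp_def)
  also have "\<dots> = of_nat (card I) * of_nat (card (perp I))"
    by (simp add: sum.If_cases)
  finally have "of_nat (card I * card (perp I)) = (\<Sum>r\<in>UNIV. \<Sum>x\<in>I. \<psi> (r * x))"
    by simp
  also have "\<dots> = (\<Sum>x\<in>I. \<Sum>r\<in>UNIV. \<psi> (x * r))"
    by (subst sum.swap) (simp add: mult.commute)
  also have "\<dots> = (\<Sum>x\<in>I. if x = 0 then of_nat (card (UNIV :: 'a set)) else 0)"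
    by (intro sum.cong refl, subst char_sum_ideal[OF is_ideal_UNIV]) (auto dest: spec[of _ 1])
  also have "\<dots> = of_nat (card (UNIV :: 'a set))"
    using I unfolding is_ideal_def by simp
  finally show ?thesis by (simp only: of_nat_eq_iff)
qed

lemma perp_perp_pideal: "perp (perp (pideal z)) = pideal (z :: 'a)"
proof -
  define J where "J = perp (pideal z)"
  have "pideal z \<subseteq> perp J"
    unfolding J_def perp_def mem_pideal_iff mem_perp_pideal_iff by (auto simp: ac_simps)
  moreover have "card (perp J) = card (pideal z)"
  proof -
    have "card (pideal z) * card J = card J * card (perp J)"
      using card_mult_card_perp[OF is_ideal_pideal[of z]] card_mult_card_perp[OF is_ideal_perp[of "pideal z"]]
      by (simp add: J_def mult.commute)
    moreover have "0 \<in> J"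
      using is_ideal_perp[of "pideal z"] unfolding J_def is_ideal_def by blast
    hence "card J > 0" by (auto simp: card_gt_0_iff)
    ultimately show ?thesis by (metis mult.commute mult_left_cancel neq0_conv)
  qed
  ultimately show ?thesis by (metis J_def card_subset_eq finite)
qed

lemma char_sum_fibre:
  assumes "z * \<beta> = c"
  shows "(\<Sum>x | z * x = c. \<psi> (r * x)) =
         (if r \<in> pideal z then of_nat (card (perp (pideal z))) * \<psi> (r * \<beta>) else 0)"
proof -
  define J where "J = perp (pideal z)"
  have "(\<Sum>x | z * x = c. \<psi> (r * x)) = (\<Sum>t\<in>J. \<psi> (r * (\<beta> + t)))"
    using assms
    by (intro sum.reindex_bij_witness[of _ "\<lambda>t. \<beta> + t" "\<lambda>x. x - \<beta>"])
       (auto simp: J_def mem_perp_pideal_iff algebra_simps)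
  also have "\<dots> = \<psi> (r * \<beta>) * (\<Sum>t\<in>J. \<psi> (r * t))"
    by (simp add: sum_distrib_left distrib_left psi_add)
  also have "(\<Sum>t\<in>J. \<psi> (r * t)) = (if r \<in> pideal z then of_nat (card J) else 0)"
  proof -
    have "(\<forall>t\<in>J. r * t = 0) \<longleftrightarrow> r \<in> perp J" by (simp add: perp_def)
    also have "perp J = pideal z" by (simp add: J_def perp_perp_pideal)
    finally show ?thesis using char_sum_ideal[OF is_ideal_perp[of "pideal z"], of r] by (simp add: J_def)
  qed
  finally show ?thesis by (simp add: J_def)
qed

lemma char_sum_fibre_one:
  "(\<Sum>z | x * z = b. \<psi> z) = (if x \<in> ring_units then \<psi> (b * uinv x) else 0)"
proof (cases "x \<in> ring_units")
  case True
  have "x * z = b \<longleftrightarrow> z = b * uinv x" for z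
  proof
    have "(x * z) * uinv x = z * (x * uinv x)" by (simp add: ac_simps)
    moreover assume "x * z = b"
    ultimately show "z = b * uinv x" by (simp add: unit_mult_uinv[OF True])
  next
    have "x * (b * uinv x) = b * (x * uinv x)" by (simp add: ac_simps)
    moreover assume "z = b * uinv x"
    ultimately show "x * z = b" by (simp add: unit_mult_uinv[OF True])
  qed
  thus ?thesis using True by simp
next
  case False
  show ?thesis
  proof (cases "\<exists>\<beta>. x * \<beta> = b")
    case True
    then obtain \<beta> where "x * \<beta> = b" ..
    thus ?thesis using char_sum_fibre[of x \<beta> b 1] False by (simp add: one_in_pideal_iff)
  qed (use False in simp)
qed

lemma kloosterman_eq_double_sum:
  "(\<Sum>u\<in>ring_units. \<psi> (a * u + b * uinv u)) = (\<Sum>x\<in>UNIV. \<Sum>z | x * z = b. \<psi> (a * x) * \<psi> z)"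
proof -
  have "(\<Sum>z | x * z = b. \<psi> (a * x) * \<psi> z) =
        (if x \<in> ring_units then \<psi> (a * x + b * uinv x) else 0)" for x
    by (simp add: sum_distrib_left[symmetric] char_sum_fibre_one psi_add)
  thus ?thesis by (simp add: sum.If_cases)
qed

lemma double_sum_eq_divisor_sum:
  "(\<Sum>z\<in>UNIV. \<Sum>x | x * z = b. \<psi> (a * x) * \<psi> z) =
   (\<Sum>e | a \<in> pideal e \<and> b \<in> pideal e. of_nat (card (perp (pideal e))) * divisor_term \<psi> a b e)"
proof -
  have "(\<Sum>x | x * z = b. \<psi> (a * x) * \<psi> z) =
        (if a \<in> pideal z \<and> b \<in> pideal z
         then of_nat (card (perp (pideal z))) * divisor_term \<psi> a b z else 0)" for z
  proof (cases "b \<in> pideal z")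
    case True
    define \<beta> where "\<beta> = (SOME \<beta>. b = z * \<beta>)"
    have z\<beta>: "z * \<beta> = b"
      unfolding \<beta>_def using True by (metis (mono_tags) mem_pideal_iff someI_ex)
    have "{x. x * z = b} = {x. z * x = b}" by (simp add: mult.commute)
    hence "(\<Sum>x | x * z = b. \<psi> (a * x) * \<psi> z) = \<psi> z * (\<Sum>x | z * x = b. \<psi> (a * x))"
      by (simp add: sum_distrib_left mult.commute)
    also have "\<dots> = \<psi> z * (if a \<in> pideal z then of_nat (card (perp (pideal z))) * \<psi> (a * \<beta>) else 0)"
      by (simp add: char_sum_fibre[OF z\<beta>])
    finally show ?thesis
      using True by (simp add: divisor_term_def \<beta>_def[symmetric] mult.left_commute)
  next
    case False
    hence "{x. x * z = b} = {}" by (auto simp: mem_pideal_iff mult.commute)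
    thus ?thesis using False by simp
  qed
  thus ?thesis by (simp add: sum.If_cases)
qed

lemma kloosterman_eq_divisor_sum:
  "(\<Sum>u\<in>ring_units. \<psi> (a * u + b * uinv u)) =
   (\<Sum>e | a \<in> pideal e \<and> b \<in> pideal e. of_nat (card (perp (pideal e))) * divisor_term \<psi> a b e)"
  unfolding kloosterman_eq_double_sum double_sum_eq_divisor_sum[symmetric]
  using sum.swap_restrict[of UNIV UNIV "\<lambda>x z. \<psi> (a * x) * \<psi> z" "\<lambda>x z. x * z = b"] by simp

lemma divisor_term_mult_unit:
  assumes u: "u \<in> ring_units" and a: "a = d * a0" and b: "b = d * b0"
  shows "divisor_term \<psi> a b (d * u) = \<psi> (d * u) * \<psi> (d * (a0 * b0) * uinv u)"
proof -
  have 1: "u * uinv u = 1" using unit_mult_uinv[OF u] .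
  define \<beta> where "\<beta> = (SOME \<beta>. b = d * u * \<beta>)"
  have "b = d * u * (uinv u * b0)" using b 1 by (simp add: ac_simps)
  hence "b = d * u * \<beta>" unfolding \<beta>_def by (rule someI)
  hence "d * (a0 * b0) * uinv u = a * \<beta> * (u * uinv u)" using a b by (simp add: ac_simps)
  thus ?thesis using 1 by (simp add: divisor_term_def \<beta>_def)
qed

lemma T_term_eq_sum_generators:
  assumes "a = d * a0" and "b = d * b0"
  shows "T_term \<psi> d a0 b0 = (\<Sum>e | pideal e = pideal d. divisor_term \<psi> a b e)"
proof (cases "d = 0")
  case True
  hence "{e. pideal e = pideal d} = {0}" using pideal_eq_zero_iff by auto
  thus ?thesis using assms True by (simp add: T_term_def divisor_term_def psi_zero)
next
  case False
  have "(\<Sum>e | pideal e = pideal d. divisor_term \<psi> a b e) =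
        (\<Sum>C\<in>quot_units (perp (pideal d)). divisor_term \<psi> a b (d * unit_lift C))"
    by (rule sum.reindex_bij_betw[OF bij_betw_quot_units_generators, symmetric])
  also have "\<dots> = (\<Sum>C\<in>quot_units (perp (pideal d)).
                      \<psi> (d * unit_lift C) * \<psi> (d * (a0 * b0) * uinv (unit_lift C)))"
    by (intro sum.cong refl divisor_term_mult_unit[OF unit_lift_in_coset(2) assms])
  finally show ?thesis using False by (simp add: T_term_def)
qed

lemma card_perp_mult_T_term:
  assumes "a = d * a0" and "b = d * b0"
  shows "of_nat (card (perp (pideal d))) * T_term \<psi> d a0 b0 =
         (\<Sum>e | pideal e = pideal d. of_nat (card (perp (pideal e))) * divisor_term \<psi> a b e)"
  unfolding T_term_eq_sum_generators[OF assms] sum_distrib_left by (rule sum.cong) auto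

lemma kloosterman_eq_sum_div_ideals:
  assumes gen: "\<forall>D\<in>div_ideals a b. D = pideal (g D) \<and> a = g D * a0 D \<and> b = g D * b0 D"
  shows "(\<Sum>u\<in>ring_units. \<psi> (a * u + b * uinv u)) =
         (\<Sum>D\<in>div_ideals a b. of_nat (card (perp (pideal (g D)))) * T_term \<psi> (g D) (a0 D) (b0 D))"
proof -
  let ?S = "{e. a \<in> pideal e \<and> b \<in> pideal e}"
  let ?w = "\<lambda>e. of_nat (card (perp (pideal e))) * divisor_term \<psi> a b e"
  have "of_nat (card (perp (pideal (g D)))) * T_term \<psi> (g D) (a0 D) (b0 D) =
        (\<Sum>e\<in>{e \<in> ?S. pideal e = D}. ?w e)" if D: "D \<in> div_ideals a b" for D
  proof -
    from gen D have gD: "D = pideal (g D)" "a = g D * a0 D" "b = g D * b0 D" by auto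
    have "{e \<in> ?S. pideal e = D} = {e. pideal e = pideal (g D)}"
      using D gD(1) by (auto simp: div_ideals_def mem_pideal_iff_subset)
    thus ?thesis by (simp add: card_perp_mult_T_term[OF gD(2,3)])
  qed
  hence "(\<Sum>D\<in>div_ideals a b. of_nat (card (perp (pideal (g D)))) * T_term \<psi> (g D) (a0 D) (b0 D))
        = (\<Sum>D\<in>div_ideals a b. \<Sum>e\<in>{e \<in> ?S. pideal e = D}. ?w e)"
    by (rule sum.cong[OF refl])
  also have "\<dots> = (\<Sum>e\<in>?S. ?w e)"
    by (rule sum.group) (auto simp: div_ideals_def mem_pideal_iff_subset)
  finally show ?thesis by (simp add: kloosterman_eq_divisor_sum)
qed

end

theorem mainTheorem1:
  fixes \<psi> :: "'a::{comm_ring_1,finite} \<Rightarrow> complex" and a b :: 'a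
  assumes "frobenius_ring TYPE('a)"
    and "primitive_char \<psi>"
  shows "(\<forall>D d d' a0 b0 a0' b0'.
            D \<in> div_ideals a b \<and> D = pideal d \<and> D = pideal d' \<and>
            a = d * a0 \<and> b = d * b0 \<and> a = d' * a0' \<and> b = d' * b0' \<longrightarrow>
            T_term \<psi> d a0 b0 = T_term \<psi> d' a0' b0' \<and>
            card (perp (pideal d)) = card (perp (pideal d')))
       \<and> (\<forall>g a0 b0.
            (\<forall>D\<in>div_ideals a b. D = pideal (g D) \<and> a = g D * a0 D \<and> b = g D * b0 D) \<longrightarrow>
            (\<Sum>u\<in>ring_units. \<psi> (a * u + b * uinv u)) =
            (\<Sum>D\<in>div_ideals a b.
                of_nat (card (perp (pideal (g D)))) * T_term \<psi> (g D) (a0 D) (b0 D)))"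
proof (intro conjI allI impI)
  interpret primitive_character \<psi> by (rule primitive_character.intro) fact
  fix D d d' a0 b0 a0' b0'
  assume "D \<in> div_ideals a b \<and> D = pideal d \<and> D = pideal d' \<and>
          a = d * a0 \<and> b = d * b0 \<and> a = d' * a0' \<and> b = d' * b0'"
  hence D: "pideal d = pideal d'" and a: "a = d * a0" "a = d' * a0'" and b: "b = d * b0" "b = d' * b0'"
    by auto
  show "T_term \<psi> d a0 b0 = T_term \<psi> d' a0' b0'"
    unfolding T_term_eq_sum_generators[OF a(1) b(1)] T_term_eq_sum_generators[OF a(2) b(2)] D ..
  show "card (perp (pideal d)) = card (perp (pideal d'))"
    using D by simp
next
  interpret primitive_character \<psi> by (rule primitive_character.intro) fact
  fix g a0 b0
  assume "\<forall>D\<in>div_ideals a b. D = pideal (g D) \<and> a = g D * a0 D \<and> b = g D * b0 D"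
  thus "(\<Sum>u\<in>ring_units. \<psi> (a * u + b * uinv u)) =
      (\<Sum>D\<in>div_ideals a b. of_nat (card (perp (pideal (g D)))) * T_term \<psi> (g D) (a0 D) (b0 D))"
    by (rule kloosterman_eq_sum_div_ideals)
qed

end
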